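(* For all $\epsilon\in[0,1]$ and all $z\in(0,+\infty)^{d_1}\times\{0\}^{d_2}$, the limit \[ \sigma^{\mathcal D}_\epsilon(z):=\lim_{n\to\infty}\frac1n\mathbb{E}\big[S^{\mathcal D}_\epsilon(\lfloor nz\rfloor)\big] \] exists (and is finite).
   Context: Fix $d_1\ge1$, $d_2\ge0$, $d=d_1+d_2$; $\mathbb{Z}^d=\mathbb{Z}^{d_1}\times\mathbb{Z}^{d_2}$, $\mathrm{Proj}^{d_2}$ the projection on the last $d_2$ coordinates, $\lfloor\cdot\rfloor$ the coordinatewise integer part. Sites $x\in\mathbb{Z}^d$ are independently open with probability $\epsilon$. For $x,y\in\mathbb{R}^d$: $x\prec y$ iff $x_i<y_i$ for all $i\le d_1$; $x\preceq y$ iff $x_i\le y_i$ for all $i\le d_1$. For $x\preceq y$ in $\mathbb{Z}^{d_1}\times\{0\}^{d_2}$, $\mathcal{D}_\epsilon(x,y)$ is the set of finite sequences $s=(w(1),\dots,w(k))$, $k\ge0$, of open sites with $x\preceq w(1)\prec\cdots\prec w(k)\prec y$; with $w(0)=x,w(k+1)=y$, $V(s)=\sum_{i=1}^{k+1}\|\mathrm{Proj}^{d_2}(w(i))-\mathrm{Proj}^{d_2}(w(i-1))\|_1$, $R(s)=k$, $S^{\mathcal D}_\epsilon(x,y)=\sup_{s\in\mathcal{D}_\epsilon(x,y)}(R(s)-V(s))$ and $S^{\mathcal D}_\epsilon(y)=S^{\mathcal D}_\epsilon(0,y)$. *)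

theory Defs
  imports "HOL-Probability.Probability"
begin

text \<open>Sites of Z^d, d = d1 + d2, are integer lists of length d; the first d1 entries
  are the "time" coordinates, the last d2 entries the "space" coordinates.\<close>

definition sites :: "nat \<Rightarrow> int list set" where
  "sites d = {x. length x = d}"

definition sprec :: "nat \<Rightarrow> int list \<Rightarrow> int list \<Rightarrow> bool" where
  "sprec d1 x y \<longleftrightarrow> (\<forall>i<d1. x ! i < y ! i)"

definition wprec :: "nat \<Rightarrow> int list \<Rightarrow> int list \<Rightarrow> bool" where
  "wprec d1 x y \<longleftrightarrow> (\<forall>i<d1. x ! i \<le> y ! i)"

definition projdist :: "nat \<Rightarrow> int list \<Rightarrow> int list \<Rightarrow> int" where
  "projdist d1 a b = (\<Sum>j<length a - d1. \<bar>drop d1 a ! j - drop d1 b ! j\<bar>)"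

text \<open>Admissible sequences D_eps(x,y) for configuration omega (open sites = True).\<close>
definition Dpaths :: "nat \<Rightarrow> nat \<Rightarrow> (int list \<Rightarrow> bool) \<Rightarrow> int list \<Rightarrow> int list \<Rightarrow> int list list set" where
  "Dpaths d1 d2 \<omega> x y = {ws. (\<forall>w\<in>set ws. w \<in> sites (d1 + d2) \<and> \<omega> w)
      \<and> sorted_wrt (sprec d1) ws
      \<and> (ws \<noteq> [] \<longrightarrow> wprec d1 x (hd ws) \<and> sprec d1 (last ws) y)}"

definition Vcost :: "nat \<Rightarrow> int list \<Rightarrow> int list list \<Rightarrow> int list \<Rightarrow> int" where
  "Vcost d1 x ws y = (let p = x # ws @ [y] in sum_list (map2 (projdist d1) p (tl p)))"

definition SD :: "nat \<Rightarrow> nat \<Rightarrow> (int list \<Rightarrow> bool) \<Rightarrow> int list \<Rightarrow> int list \<Rightarrow> real" where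
  "SD d1 d2 \<omega> x y = (SUP ws\<in>Dpaths d1 d2 \<omega> x y. real (length ws) - real_of_int (Vcost d1 x ws y))"

definition perc :: "nat \<Rightarrow> real \<Rightarrow> (int list \<Rightarrow> bool) measure" where
  "perc d \<epsilon> = PiM (sites d) (\<lambda>_. measure_pmf (bernoulli_pmf \<epsilon>))"

definition target :: "nat \<Rightarrow> real list \<Rightarrow> nat \<Rightarrow> int list" where
  "target d2 z n = map (\<lambda>r. \<lfloor>real n * r\<rfloor>) z @ replicate d2 0"

end

theory Submission
  imports Defs
begin

text \<open>Concatenating an admissible sequence from 0 to \<open>\<lfloor>mz\<rfloor>\<close> with one from \<open>\<lfloor>mz\<rfloor>\<close> to
  \<open>\<lfloor>mz\<rfloor> + \<lfloor>nz\<rfloor>\<close> gives an admissible sequence from 0 to \<open>\<lfloor>mz\<rfloor> + \<lfloor>nz\<rfloor>\<close>, and by the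
  triangle inequality its cost V is at most the sum of the two costs; so S is superadditive
  along concatenation. The percolation measure is invariant under translations, hence the
  expectation of the second piece equals \<open>\<bbbE> S(\<lfloor>nz\<rfloor>)\<close>. Since \<open>\<lfloor>mz\<rfloor> + \<lfloor>nz\<rfloor> \<le> \<lfloor>(m+n)z\<rfloor>\<close>
  and S grows with the endpoint, \<open>n \<mapsto> \<bbbE> S(\<lfloor>nz\<rfloor>)\<close> is superadditive. It is nonnegative
  (take the empty sequence) and at most \<open>n z\<^sub>1\<close>, because the first coordinates of an
  admissible sequence strictly increase. Fekete's lemma gives the limit.\<close>

lemma superadditive_mult_le:
  fixes a :: "nat \<Rightarrow> real"
  assumes superadd: "\<And>m n. a m + a n \<le> a (m + n)" and nonneg: "\<And>n. 0 \<le> a n"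
  shows "real q * a k \<le> a (q * k)"
proof (induction q)
  case 0
  then show ?case using nonneg by simp
next
  case (Suc q)
  have "real (Suc q) * a k = a k + real q * a k" by (simp add: algebra_simps)
  also have "\<dots> \<le> a k + a (q * k)" using Suc by simp
  also have "\<dots> \<le> a (k + q * k)" using superadd by blast
  finally show ?case by (simp add: add.commute)
qed

lemma superadditive_le_div_multiple:
  fixes a :: "nat \<Rightarrow> real"
  assumes superadd: "\<And>m n. a m + a n \<le> a (m + n)" and nonneg: "\<And>n. 0 \<le> a n"
    and "k \<ge> 1" "n \<ge> k"
  shows "a k / real k - a k / real n \<le> a n / real n"
proof -
  define q where "q = n div k"
  have "n \<le> q * k + k"
    using mod_less_divisor[of k n] div_mult_mod_eq[of n k] \<open>k \<ge> 1\<close> unfolding q_def by linarith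
  then have q_bound: "real n - real k \<le> real q * real k"
    by (simp add: of_nat_mult[symmetric] del: of_nat_mult)
  have "a (q * k) + a (n - q * k) \<le> a n"
    using superadd[of "q * k" "n - q * k"] unfolding q_def by (simp add: mult.commute)
  then have "real q * a k \<le> a n"
    using superadditive_mult_le[OF superadd nonneg, of q k] nonneg[of "n - q * k"] by linarith
  moreover have "(real n - real k) * (a k / real k) \<le> real q * a k"
    using mult_right_mono[OF q_bound, of "a k / real k"] nonneg[of k] \<open>k \<ge> 1\<close> by simp
  ultimately have "(real n - real k) * (a k / real k) / real n \<le> a n / real n"
    by (intro divide_right_mono) auto
  moreover have "(real n - real k) * (a k / real k) / real n = a k / real k - a k / real n"
    using assms(3,4) by (simp add: field_simps)
  ultimately show ?thesis by simp
qed

lemma fekete_superadditive_convergent: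
  fixes a :: "nat \<Rightarrow> real"
  assumes superadd: "\<And>m n. a m + a n \<le> a (m + n)" and nonneg: "\<And>n. 0 \<le> a n"
    and linear_bound: "\<And>n. a n \<le> C * real n"
  shows "convergent (\<lambda>n. (1 / real n) * a n)"
proof -
  define L where "L = (SUP n\<in>{1..}. a n / real n)"
  have bdd: "bdd_above ((\<lambda>n. a n / real n) ` {1..})"
    using linear_bound by (intro bdd_aboveI2[where M = C]) (simp add: divide_le_eq mult.commute)
  have upper: "a n / real n \<le> L" if "n \<ge> 1" for n
    unfolding L_def using bdd that by (intro cSUP_upper) auto
  have "(\<lambda>n. a n / real n) \<longlonglongrightarrow> L"
  proof (rule LIMSEQ_I)
    fix r :: real
    assume "0 < r"
    then have "L - r / 2 < L" by simp
    then obtain k where k: "k \<ge> 1" "L - r / 2 < a k / real k"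
      unfolding L_def using bdd by (subst (asm) less_cSUP_iff) auto
    have "norm (a n / real n - L) < r" if "nat \<lceil>2 * a k / r\<rceil> + k + 1 \<le> n" for n
    proof -
      have "n \<ge> k" "n \<ge> 1" "real n > 2 * a k / r" using that k by linarith+
      then have "a k / real n < r / 2"
        using \<open>0 < r\<close> by (simp add: divide_less_eq field_simps)
      then have "L - r < a n / real n"
        using superadditive_le_div_multiple[OF superadd nonneg k(1) \<open>n \<ge> k\<close>] k by linarith
      then show ?thesis using upper[OF \<open>n \<ge> 1\<close>] \<open>0 < r\<close> by simp
    qed
    then show "\<exists>no. \<forall>n\<ge>no. norm (a n / real n - L) < r" by blast
  qed
  then show ?thesis unfolding convergent_def by (auto simp: mult.commute)
qed

fun projdist_chain :: "nat \<Rightarrow> int list list \<Rightarrow> int" where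
  "projdist_chain d1 [] = 0"
| "projdist_chain d1 [a] = 0"
| "projdist_chain d1 (a # b # r) = projdist d1 a b + projdist_chain d1 (b # r)"

lemma sum_list_map2_projdist: "sum_list (map2 (projdist d1) p (tl p)) = projdist_chain d1 p"
  by (induction d1 p rule: projdist_chain.induct) auto

lemma Vcost_eq_projdist_chain: "Vcost d1 x ws y = projdist_chain d1 (x # ws @ [y])"
  unfolding Vcost_def Let_def sum_list_map2_projdist ..

lemma projdist_chain_append:
  "p \<noteq> [] \<Longrightarrow> q \<noteq> [] \<Longrightarrow>
    projdist_chain d1 (p @ q) = projdist_chain d1 p + projdist d1 (last p) (hd q) + projdist_chain d1 q"
proof (induction d1 p rule: projdist_chain.induct)
  case (2 d1 a)
  then show ?case by (cases q) auto
qed auto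

lemma projdist_nonneg: "0 \<le> projdist d1 a b"
  unfolding projdist_def by (intro sum_nonneg) auto

lemma projdist_chain_nonneg: "0 \<le> projdist_chain d1 p"
  by (induction d1 p rule: projdist_chain.induct) (auto intro: add_nonneg_nonneg projdist_nonneg)

lemma projdist_chain_map:
  "(\<And>u v. u \<in> set p \<Longrightarrow> v \<in> set p \<Longrightarrow> projdist d1 (f u) (f v) = projdist d1 u v) \<Longrightarrow>
    projdist_chain d1 (map f p) = projdist_chain d1 p"
  by (induction d1 p rule: projdist_chain.induct) auto

lemma projdist_triangle:
  assumes "length a = length b" "length b = length c"
  shows "projdist d1 a c \<le> projdist d1 a b + projdist d1 b c"
  unfolding projdist_def using assms
  by (simp add: sum.distrib[symmetric]) (intro sum_mono, linarith)

lemma projdist_cong_right: "drop d1 b = drop d1 b' \<Longrightarrow> projdist d1 a b = projdist d1 a b'"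
  unfolding projdist_def by simp

lemma projdist_eq_0_if_drop_eq: "drop d1 a = drop d1 b \<Longrightarrow> projdist d1 a b = 0"
  unfolding projdist_def by simp

definition vadd :: "int list \<Rightarrow> int list \<Rightarrow> int list" where
  "vadd u v = map2 (+) u v"

lemma length_vadd [simp]: "length (vadd u v) = min (length u) (length v)"
  unfolding vadd_def by simp

lemma nth_vadd [simp]: "i < length u \<Longrightarrow> i < length v \<Longrightarrow> vadd u v ! i = u ! i + v ! i"
  unfolding vadd_def by simp

lemma drop_vadd: "drop k (vadd u v) = vadd (drop k u) (drop k v)"
  unfolding vadd_def by (simp add: drop_map drop_zip)

lemma vadd_uminus_cancel: "length w = length t \<Longrightarrow> vadd (vadd w (map uminus t)) t = w"
  by (intro nth_equalityI) auto

lemma inj_on_vadd: "inj_on (\<lambda>u. vadd u t) (sites (length t))"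
proof (rule inj_onI)
  fix u v
  assume "u \<in> sites (length t)" "v \<in> sites (length t)" "vadd u t = vadd v t"
  then show "u = v"
  proof (intro nth_equalityI)
    fix i
    assume "i < length u"
    then have "vadd u t ! i = vadd v t ! i" using \<open>vadd u t = vadd v t\<close> by simp
    then show "u ! i = v ! i"
      using \<open>i < length u\<close> \<open>u \<in> sites (length t)\<close> \<open>v \<in> sites (length t)\<close>
      by (simp add: sites_def)
  qed (simp add: sites_def)
qed

lemma projdist_vadd:
  assumes "length a = length s" "length b = length s"
  shows "projdist d1 (vadd a s) (vadd b s) = projdist d1 a b"
  unfolding projdist_def drop_vadd using assms by (intro sum.cong) auto

lemma wprec_trans: "wprec d1 a b \<Longrightarrow> wprec d1 b c \<Longrightarrow> wprec d1 a c"
  unfolding wprec_def by (meson order_trans)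

lemma sprec_wprec_trans: "sprec d1 a b \<Longrightarrow> wprec d1 b c \<Longrightarrow> sprec d1 a c"
  unfolding wprec_def sprec_def by (meson less_le_trans)

lemma wprec_sprec_trans: "wprec d1 a b \<Longrightarrow> sprec d1 b c \<Longrightarrow> sprec d1 a c"
  unfolding wprec_def sprec_def by (meson le_less_trans)

lemma sorted_sprec_wprec_last:
  assumes "sorted_wrt (sprec d1) ws" "u \<in> set ws"
  shows "wprec d1 u (last ws)"
  using assms
proof (induction ws)
  case (Cons a r)
  show ?case
  proof (cases "r = []")
    case True
    then show ?thesis using Cons.prems by (auto simp: wprec_def)
  next
    case False
    then have "sprec d1 a (last r)" using Cons.prems(1) by auto
    then show ?thesis using Cons False by (auto simp: wprec_def sprec_def less_imp_le)
  qed
qed simp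

lemma sorted_sprec_hd_wprec:
  assumes "sorted_wrt (sprec d1) ws" "u \<in> set ws"
  shows "wprec d1 (hd ws) u"
  using assms by (cases ws) (auto simp: wprec_def sprec_def less_imp_le)

lemma length_le_of_sorted_sprec:
  assumes "sorted_wrt (sprec d1) ws" "d1 \<ge> 1" "ws \<noteq> []" "a \<le> hd ws ! 0" "last ws ! 0 < b"
  shows "int (length ws) \<le> b - a"
  using assms
proof (induction ws arbitrary: a)
  case (Cons u r)
  show ?case
  proof (cases "r = []")
    case True
    then show ?thesis using Cons.prems by simp
  next
    case False
    have "sprec d1 u (hd r)" using Cons.prems(1) False by (cases r) auto
    then have "u ! 0 < hd r ! 0" using Cons.prems(2) unfolding sprec_def by auto
    then have "int (length r) \<le> b - (a + 1)"
      using Cons.prems False by (intro Cons.IH) auto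
    then show ?thesis by simp
  qed
qed simp

definition reward :: "nat \<Rightarrow> int list \<Rightarrow> int list list \<Rightarrow> int list \<Rightarrow> real" where
  "reward d1 x ws y = real (length ws) - real_of_int (Vcost d1 x ws y)"

lemma SD_eq_SUP_reward: "SD d1 d2 \<omega> x y = (SUP ws\<in>Dpaths d1 d2 \<omega> x y. reward d1 x ws y)"
  unfolding SD_def reward_def ..

lemma Nil_in_Dpaths: "[] \<in> Dpaths d1 d2 \<omega> x y"
  unfolding Dpaths_def by simp

lemma Dpaths_nonempty: "Dpaths d1 d2 \<omega> x y \<noteq> {}"
  using Nil_in_Dpaths by blast

lemma reward_le_first_coord_gap:
  assumes "ws \<in> Dpaths d1 d2 \<omega> x y" "d1 \<ge> 1"
  shows "reward d1 x ws y \<le> real (nat (y ! 0 - x ! 0))"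
proof -
  have "int (length ws) \<le> int (nat (y ! 0 - x ! 0))"
  proof (cases "ws = []")
    case False
    with assms have "x ! 0 \<le> hd ws ! 0" "last ws ! 0 < y ! 0" "sorted_wrt (sprec d1) ws"
      unfolding Dpaths_def wprec_def sprec_def by auto
    then show ?thesis
      using length_le_of_sorted_sprec[of d1 ws "x ! 0" "y ! 0"] assms(2) False by simp
  qed simp
  moreover have "0 \<le> Vcost d1 x ws y"
    unfolding Vcost_eq_projdist_chain by (rule projdist_chain_nonneg)
  ultimately show ?thesis unfolding reward_def by linarith
qed

lemma bdd_above_reward:
  "d1 \<ge> 1 \<Longrightarrow> bdd_above ((\<lambda>ws. reward d1 x ws y) ` Dpaths d1 d2 \<omega> x y)"
  by (rule bdd_aboveI2[where M = "real (nat (y ! 0 - x ! 0))"]) (rule reward_le_first_coord_gap)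

lemma SD_nonneg: "d1 \<ge> 1 \<Longrightarrow> drop d1 x = drop d1 y \<Longrightarrow> 0 \<le> SD d1 d2 \<omega> x y"
  unfolding SD_eq_SUP_reward
  using cSUP_upper[OF Nil_in_Dpaths bdd_above_reward, of d1 x y d2 \<omega>]
  by (simp add: reward_def Vcost_eq_projdist_chain projdist_eq_0_if_drop_eq)

lemma SD_le_first_coord_gap: "d1 \<ge> 1 \<Longrightarrow> SD d1 d2 \<omega> x y \<le> real (nat (y ! 0 - x ! 0))"
  unfolding SD_eq_SUP_reward by (intro cSUP_least Dpaths_nonempty reward_le_first_coord_gap)

lemma append_in_Dpaths:
  assumes ws1: "ws1 \<in> Dpaths d1 d2 \<omega> x y" and ws2: "ws2 \<in> Dpaths d1 d2 \<omega> y u"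
    and "wprec d1 x y" "wprec d1 y u"
  shows "ws1 @ ws2 \<in> Dpaths d1 d2 \<omega> x u"
proof -
  have sorted: "sorted_wrt (sprec d1) ws1" "sorted_wrt (sprec d1) ws2"
    using ws1 ws2 unfolding Dpaths_def by auto
  have across: "sprec d1 a b" if a: "a \<in> set ws1" and b: "b \<in> set ws2" for a b
  proof -
    have "sprec d1 (last ws1) y" "wprec d1 y (hd ws2)"
      using ws1 ws2 a b unfolding Dpaths_def by auto
    with sorted_sprec_wprec_last[OF sorted(1) a] sorted_sprec_hd_wprec[OF sorted(2) b]
    show ?thesis by (meson wprec_sprec_trans sprec_wprec_trans)
  qed
  have "wprec d1 x (hd (ws1 @ ws2))" if "ws1 @ ws2 \<noteq> []"
  proof (cases "ws1 = []")
    case True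
    then show ?thesis
      using that ws2 \<open>wprec d1 x y\<close> unfolding Dpaths_def by (auto intro: wprec_trans)
  qed (use ws1 in \<open>auto simp: Dpaths_def\<close>)
  moreover have "sprec d1 (last (ws1 @ ws2)) u" if "ws1 @ ws2 \<noteq> []"
  proof (cases "ws2 = []")
    case True
    then show ?thesis
      using that ws1 \<open>wprec d1 y u\<close> unfolding Dpaths_def by (auto intro: sprec_wprec_trans)
  qed (use ws2 in \<open>auto simp: Dpaths_def\<close>)
  ultimately show ?thesis
    using ws1 ws2 sorted across unfolding Dpaths_def by (auto simp: sorted_wrt_append)
qed

lemma Vcost_append_le:
  assumes "ws1 \<in> Dpaths d1 d2 \<omega> x y" "ws2 \<in> Dpaths d1 d2 \<omega> y u"
    and "x \<in> sites (d1 + d2)" "y \<in> sites (d1 + d2)" "u \<in> sites (d1 + d2)"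
  shows "Vcost d1 x (ws1 @ ws2) u \<le> Vcost d1 x ws1 y + Vcost d1 y ws2 u"
proof -
  let ?l = "last (x # ws1)" and ?h = "hd (ws2 @ [u])"
  have "?l \<in> sites (d1 + d2)" "?h \<in> sites (d1 + d2)"
    using assms unfolding Dpaths_def by (cases "ws1 = []"; cases ws2; auto)+
  then have "projdist d1 ?l ?h \<le> projdist d1 ?l y + projdist d1 y ?h"
    using assms(4) by (intro projdist_triangle) (auto simp: sites_def)
  then show ?thesis
    unfolding Vcost_eq_projdist_chain
    using projdist_chain_append[of "x # ws1" "ws2 @ [u]" d1]
      projdist_chain_append[of "x # ws1" "[y]" d1] projdist_chain_append[of "[y]" "ws2 @ [u]" d1]
    by simp
qed

lemma SD_superadditive:
  assumes "d1 \<ge> 1" "wprec d1 x y" "wprec d1 y u"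
    and "x \<in> sites (d1 + d2)" "y \<in> sites (d1 + d2)" "u \<in> sites (d1 + d2)"
  shows "SD d1 d2 \<omega> x y + SD d1 d2 \<omega> y u \<le> SD d1 d2 \<omega> x u"
proof -
  have "reward d1 x ws1 y + reward d1 y ws2 u \<le> SD d1 d2 \<omega> x u"
    if ws1: "ws1 \<in> Dpaths d1 d2 \<omega> x y" and ws2: "ws2 \<in> Dpaths d1 d2 \<omega> y u" for ws1 ws2
  proof -
    have "reward d1 x ws1 y + reward d1 y ws2 u \<le> reward d1 x (ws1 @ ws2) u"
      using Vcost_append_le[OF ws1 ws2 assms(4-6)] unfolding reward_def by simp
    also have "\<dots> \<le> SD d1 d2 \<omega> x u"
      unfolding SD_eq_SUP_reward using append_in_Dpaths[OF ws1 ws2 assms(2,3)]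
      by (intro cSUP_upper bdd_above_reward assms(1))
    finally show ?thesis .
  qed
  then have "SD d1 d2 \<omega> y u \<le> SD d1 d2 \<omega> x u - reward d1 x ws1 y"
    if "ws1 \<in> Dpaths d1 d2 \<omega> x y" for ws1
    unfolding SD_eq_SUP_reward[of d1 d2 \<omega> y u] using that
    by (intro cSUP_least Dpaths_nonempty) (simp add: algebra_simps)
  then have "SD d1 d2 \<omega> x y \<le> SD d1 d2 \<omega> x u - SD d1 d2 \<omega> y u"
    unfolding SD_eq_SUP_reward[of d1 d2 \<omega> x y]
    by (intro cSUP_least Dpaths_nonempty) (simp add: algebra_simps)
  then show ?thesis by simp
qed

lemma SD_mono_endpoint:
  assumes "d1 \<ge> 1" "wprec d1 y y'" "drop d1 y = drop d1 y'"
  shows "SD d1 d2 \<omega> x y \<le> SD d1 d2 \<omega> x y'"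
  unfolding SD_eq_SUP_reward
proof (rule cSUP_subset_mono[OF Dpaths_nonempty bdd_above_reward[OF assms(1)]])
  show "Dpaths d1 d2 \<omega> x y \<subseteq> Dpaths d1 d2 \<omega> x y'"
    using assms(2) unfolding Dpaths_def by (auto intro: sprec_wprec_trans)
  fix ws
  show "reward d1 x ws y \<le> reward d1 x ws y'"
    unfolding reward_def Vcost_eq_projdist_chain
    using projdist_chain_append[of "x # ws" "[y]" d1] projdist_chain_append[of "x # ws" "[y']" d1]
      projdist_cong_right[OF assms(3)]
    by simp
qed

lemma prob_space_perc: "prob_space (perc d \<epsilon>)"
  unfolding perc_def by (intro prob_space_PiM prob_space_measure_pmf)

lemma pred_perc_site: "w \<in> sites d \<Longrightarrow> Measurable.pred (perc d \<epsilon>) (\<lambda>\<omega>. \<omega> w)"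
proof -
  assume "w \<in> sites d"
  then have "(\<lambda>\<omega>. \<omega> w) \<in> measurable (perc d \<epsilon>) (measure_pmf (bernoulli_pmf \<epsilon>))"
    unfolding perc_def by (rule measurable_component_singleton)
  also have "measurable (perc d \<epsilon>) (measure_pmf (bernoulli_pmf \<epsilon>))
      = measurable (perc d \<epsilon>) (count_space UNIV)"
    by (intro measurable_cong_sets) auto
  finally show ?thesis by simp
qed

text \<open>The supremum ranges over the countable set of sequences that are admissible when every
  site is open, each of which contributes through the measurable event that its sites are open.\<close>

lemma SD_borel_measurable:
  assumes "d1 \<ge> 1"
  shows "(\<lambda>\<omega>. SD d1 d2 \<omega> x y) \<in> borel_measurable (perc (d1 + d2) \<epsilon>)"
proof (rule borel_measurableI_le)
  fix c :: real
  let ?M = "perc (d1 + d2) \<epsilon>"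
  let ?P = "Dpaths d1 d2 (\<lambda>_. True) x y"
  let ?bound = "\<lambda>\<omega>. \<forall>ws. ws \<in> ?P \<longrightarrow> (\<forall>w\<in>set ws. \<omega> w) \<longrightarrow> reward d1 x ws y \<le> c"
  have "SD d1 d2 \<omega> x y \<le> c \<longleftrightarrow> ?bound \<omega>" for \<omega>
  proof -
    have "Dpaths d1 d2 \<omega> x y = {ws \<in> ?P. \<forall>w\<in>set ws. \<omega> w}"
      unfolding Dpaths_def by auto
    then show ?thesis
      unfolding SD_eq_SUP_reward cSUP_le_iff[OF Dpaths_nonempty bdd_above_reward[OF assms]]
      by blast
  qed
  moreover have "Measurable.pred ?M ?bound"
  proof (intro pred_intros_countable(1) pred_intros_imp')
    fix ws
    assume "ws \<in> ?P"
    then have "Measurable.pred ?M (\<lambda>\<omega>. \<forall>w\<in>set ws. \<omega> w)"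
      unfolding Dpaths_def by (intro pred_intros_finite(3)) (auto intro: pred_perc_site)
    then show "Measurable.pred ?M (\<lambda>\<omega>. (\<forall>w\<in>set ws. \<omega> w) \<longrightarrow> reward d1 x ws y \<le> c)"
      by (intro pred_intros_logic(4)) auto
  qed
  ultimately show "{\<omega> \<in> space ?M. SD d1 d2 \<omega> x y \<le> c} \<in> sets ?M"
    unfolding pred_def by simp
qed

lemma SD_integrable:
  assumes "d1 \<ge> 1" "drop d1 x = drop d1 y"
  shows "integrable (perc (d1 + d2) \<epsilon>) (\<lambda>\<omega>. SD d1 d2 \<omega> x y)"
proof -
  interpret prob_space "perc (d1 + d2) \<epsilon>" by (rule prob_space_perc)
  show ?thesis
  proof (rule integrable_const_bound[where B = "real (nat (y ! 0 - x ! 0))"])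
    show "AE \<omega> in perc (d1 + d2) \<epsilon>. norm (SD d1 d2 \<omega> x y) \<le> real (nat (y ! 0 - x ! 0))"
      using SD_nonneg[OF assms] SD_le_first_coord_gap[OF assms(1)] by simp
  qed (rule SD_borel_measurable[OF assms(1)])
qed

lemma map_vadd_in_Dpaths:
  assumes "length s = d1 + d2" "ws \<in> Dpaths d1 d2 \<omega> a b"
    and "a \<in> sites (d1 + d2)" "b \<in> sites (d1 + d2)"
    and "\<And>w. w \<in> sites (d1 + d2) \<Longrightarrow> \<omega> w \<Longrightarrow> \<omega>' (vadd w s)"
  shows "map (\<lambda>w. vadd w s) ws \<in> Dpaths d1 d2 \<omega>' (vadd a s) (vadd b s)"
proof -
  have ws: "\<forall>w\<in>set ws. w \<in> sites (d1 + d2) \<and> \<omega> w" "sorted_wrt (sprec d1) ws"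
    "ws \<noteq> [] \<longrightarrow> wprec d1 a (hd ws) \<and> sprec d1 (last ws) b"
    using assms(2) unfolding Dpaths_def by auto
  have sprec_vadd: "sprec d1 (vadd u s) (vadd v s) \<longleftrightarrow> sprec d1 u v"
    and wprec_vadd: "wprec d1 (vadd u s) (vadd v s) \<longleftrightarrow> wprec d1 u v"
    if "u \<in> sites (d1 + d2)" "v \<in> sites (d1 + d2)" for u v
    using that assms(1) unfolding sprec_def wprec_def sites_def by auto
  have "sorted_wrt (sprec d1) (map (\<lambda>w. vadd w s) ws)"
    unfolding sorted_wrt_map
    by (rule sorted_wrt_mono_rel[OF _ ws(2)]) (use ws(1) sprec_vadd in auto)
  moreover have "\<forall>w\<in>set (map (\<lambda>w. vadd w s) ws). w \<in> sites (d1 + d2) \<and> \<omega>' w"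
    using ws(1) assms(1,5) by (auto simp: sites_def)
  moreover have "wprec d1 (vadd a s) (hd (map (\<lambda>w. vadd w s) ws))
      \<and> sprec d1 (last (map (\<lambda>w. vadd w s) ws)) (vadd b s)" if "ws \<noteq> []"
  proof -
    have "hd ws \<in> sites (d1 + d2)" "last ws \<in> sites (d1 + d2)" using that ws(1) by auto
    then show ?thesis using that ws(3) sprec_vadd wprec_vadd assms(3,4) by (simp add: hd_map last_map)
  qed
  ultimately show ?thesis unfolding Dpaths_def by simp
qed

lemma reward_map_vadd:
  assumes "length s = d1 + d2" "\<forall>w\<in>set ws. w \<in> sites (d1 + d2)"
    and "a \<in> sites (d1 + d2)" "b \<in> sites (d1 + d2)"
  shows "reward d1 (vadd a s) (map (\<lambda>w. vadd w s) ws) (vadd b s) = reward d1 a ws b"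
proof -
  have "projdist_chain d1 (map (\<lambda>w. vadd w s) (a # ws @ [b])) = projdist_chain d1 (a # ws @ [b])"
    using assms by (intro projdist_chain_map projdist_vadd) (auto simp: sites_def)
  then show ?thesis unfolding reward_def Vcost_eq_projdist_chain by simp
qed

lemma Dpaths_translate:
  assumes "t \<in> sites (d1 + d2)" "y \<in> sites (d1 + d2)"
  shows "Dpaths d1 d2 \<omega> t (vadd y t)
    = map (\<lambda>w. vadd w t) ` Dpaths d1 d2 (\<lambda>n\<in>sites (d1 + d2). \<omega> (vadd n t)) (replicate (d1 + d2) 0) y"
    (is "?lhs = map ?f ` Dpaths d1 d2 ?\<omega> ?origin y")
proof
  have t: "length t = d1 + d2" using assms(1) by (simp add: sites_def)
  have "?origin \<in> sites (d1 + d2)" "vadd ?origin t = t" using t by (auto simp: sites_def intro: nth_equalityI)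
  then show "map ?f ` Dpaths d1 d2 ?\<omega> ?origin y \<subseteq> ?lhs"
    using map_vadd_in_Dpaths[OF t _ _ assms(2), of _ ?\<omega> ?origin \<omega>] by auto
  show "?lhs \<subseteq> map ?f ` Dpaths d1 d2 ?\<omega> ?origin y"
  proof
    fix ws
    assume ws: "ws \<in> ?lhs"
    let ?g = "\<lambda>w. vadd w (map uminus t)"
    have "map ?g ws \<in> Dpaths d1 d2 ?\<omega> (vadd t (map uminus t)) (vadd (vadd y t) (map uminus t))"
      using t assms by (intro map_vadd_in_Dpaths[OF _ ws]) (auto simp: sites_def vadd_uminus_cancel)
    moreover have "vadd t (map uminus t) = ?origin" "vadd (vadd y t) (map uminus t) = y"
      using t assms by (auto simp: sites_def intro: nth_equalityI)
    moreover have "map ?f (map ?g ws) = ws"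
      using ws t unfolding Dpaths_def map_map o_def
      by (intro map_idI) (auto simp: vadd_uminus_cancel sites_def)
    ultimately show "ws \<in> map ?f ` Dpaths d1 d2 ?\<omega> ?origin y" by (metis image_eqI)
  qed
qed

lemma SD_translate:
  assumes "t \<in> sites (d1 + d2)" "y \<in> sites (d1 + d2)"
  shows "SD d1 d2 (\<lambda>n\<in>sites (d1 + d2). \<omega> (vadd n t)) (replicate (d1 + d2) 0) y
    = SD d1 d2 \<omega> t (vadd y t)"
proof -
  let ?\<omega> = "\<lambda>n\<in>sites (d1 + d2). \<omega> (vadd n t)" and ?origin = "replicate (d1 + d2) 0"
  have "reward d1 t (map (\<lambda>w. vadd w t) ws) (vadd y t) = reward d1 ?origin ws y"
    if "ws \<in> Dpaths d1 d2 ?\<omega> ?origin y" for ws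
  proof -
    have "vadd ?origin t = t" using assms(1) by (auto simp: sites_def intro: nth_equalityI)
    then show ?thesis
      using reward_map_vadd[of t d1 d2 ws ?origin y] that assms unfolding Dpaths_def
      by (auto simp: sites_def)
  qed
  then show ?thesis
    unfolding SD_eq_SUP_reward Dpaths_translate[OF assms] image_image by (auto intro: SUP_cong)
qed

lemma integral_SD_translate:
  assumes "d1 \<ge> 1" "t \<in> sites (d1 + d2)" "y \<in> sites (d1 + d2)"
  shows "(\<integral>\<omega>. SD d1 d2 \<omega> (replicate (d1 + d2) 0) y \<partial>perc (d1 + d2) \<epsilon>)
       = (\<integral>\<omega>. SD d1 d2 \<omega> t (vadd y t) \<partial>perc (d1 + d2) \<epsilon>)"
proof -
  let ?D = "sites (d1 + d2)" and ?B = "measure_pmf (bernoulli_pmf \<epsilon>)" and ?M = "perc (d1 + d2) \<epsilon>"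
  let ?T = "\<lambda>\<omega>. \<lambda>n\<in>?D. \<omega> (vadd n t)"
  have t: "length t = d1 + d2" using assms by (simp add: sites_def)
  have shift_into: "(\<lambda>n. vadd n t) \<in> ?D \<rightarrow> ?D" using t by (auto simp: sites_def)
  have distr: "distr ?M ?M ?T = ?M"
    unfolding perc_def
    using distr_PiM_reindex[of ?D "\<lambda>_. ?B", OF prob_space_measure_pmf _ shift_into] inj_on_vadd[of t] t
    by simp
  have T_measurable: "?T \<in> measurable ?M ?M"
    unfolding perc_def
    using shift_into by (intro measurable_restrict measurable_component_singleton) auto
  have "(\<integral>\<omega>. SD d1 d2 \<omega> (replicate (d1 + d2) 0) y \<partial>?M)
      = (\<integral>\<omega>. SD d1 d2 \<omega> (replicate (d1 + d2) 0) y \<partial>distr ?M ?M ?T)"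
    using distr by simp
  also have "\<dots> = (\<integral>\<omega>. SD d1 d2 (?T \<omega>) (replicate (d1 + d2) 0) y \<partial>?M)"
    by (rule integral_distr[OF T_measurable SD_borel_measurable[OF assms(1)]])
  also have "\<dots> = (\<integral>\<omega>. SD d1 d2 \<omega> t (vadd y t) \<partial>?M)"
    using SD_translate[OF assms(2,3)] by simp
  finally show ?thesis .
qed

lemma integral_SD_superadditive:
  assumes "d1 \<ge> 1" "wprec d1 x y" "wprec d1 y u"
    and "x \<in> sites (d1 + d2)" "y \<in> sites (d1 + d2)" "u \<in> sites (d1 + d2)"
    and "drop d1 x = drop d1 y" "drop d1 y = drop d1 u"
  shows "(\<integral>\<omega>. SD d1 d2 \<omega> x y \<partial>perc (d1 + d2) \<epsilon>) + (\<integral>\<omega>. SD d1 d2 \<omega> y u \<partial>perc (d1 + d2) \<epsilon>)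
    \<le> (\<integral>\<omega>. SD d1 d2 \<omega> x u \<partial>perc (d1 + d2) \<epsilon>)"
proof -
  have xy: "integrable (perc (d1 + d2) \<epsilon>) (\<lambda>\<omega>. SD d1 d2 \<omega> x y)"
    and yu: "integrable (perc (d1 + d2) \<epsilon>) (\<lambda>\<omega>. SD d1 d2 \<omega> y u)"
    and xu: "integrable (perc (d1 + d2) \<epsilon>) (\<lambda>\<omega>. SD d1 d2 \<omega> x u)"
    using assms by (auto intro: SD_integrable)
  show ?thesis
    unfolding Bochner_Integration.integral_add[OF xy yu, symmetric]
    using SD_superadditive[OF assms(1-6)]
    by (intro integral_mono Bochner_Integration.integrable_add xy yu xu)
qed

lemma integral_SD_mono_endpoint:
  assumes "d1 \<ge> 1" "wprec d1 y y'" "drop d1 x = drop d1 y" "drop d1 y = drop d1 y'"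
  shows "(\<integral>\<omega>. SD d1 d2 \<omega> x y \<partial>perc (d1 + d2) \<epsilon>) \<le> (\<integral>\<omega>. SD d1 d2 \<omega> x y' \<partial>perc (d1 + d2) \<epsilon>)"
  using assms SD_mono_endpoint[OF assms(1,2,4)]
  by (intro integral_mono SD_integrable) auto

lemma target_in_sites: "length z = d1 \<Longrightarrow> target d2 z n \<in> sites (d1 + d2)"
  by (simp add: target_def sites_def)

lemma drop_target: "length z = d1 \<Longrightarrow> drop d1 (target d2 z n) = replicate d2 0"
  by (simp add: target_def)

lemma nth_target: "length z = d1 \<Longrightarrow> i < d1 \<Longrightarrow> target d2 z n ! i = \<lfloor>real n * z ! i\<rfloor>"
  by (simp add: target_def nth_append)

lemma wprec_target_chain:
  assumes "length z = d1" "\<forall>r\<in>set z. r > 0"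
  shows "wprec d1 (replicate (d1 + d2) 0) (target d2 z m)"
    and "wprec d1 (target d2 z m) (vadd (target d2 z n) (target d2 z m))"
    and "wprec d1 (vadd (target d2 z n) (target d2 z m)) (target d2 z (m + n))"
proof -
  have "\<lfloor>real n * r\<rfloor> + \<lfloor>real m * r\<rfloor> \<le> \<lfloor>real (m + n) * r\<rfloor>" for r
    using le_floor_add[of "real n * r" "real m * r"] by (simp add: algebra_simps)
  moreover have "0 \<le> \<lfloor>real k * z ! i\<rfloor>" if "i < d1" for i k
  proof -
    have "z ! i > 0" using assms that by auto
    then show ?thesis by simp
  qed
  ultimately show "wprec d1 (replicate (d1 + d2) 0) (target d2 z m)"
    and "wprec d1 (target d2 z m) (vadd (target d2 z n) (target d2 z m))"
    and "wprec d1 (vadd (target d2 z n) (target d2 z m)) (target d2 z (m + n))"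
    using target_in_sites[OF assms(1)] by (auto simp: wprec_def sites_def nth_target[OF assms(1)])
qed

definition mean_SD :: "nat \<Rightarrow> nat \<Rightarrow> real \<Rightarrow> real list \<Rightarrow> nat \<Rightarrow> real" where
  "mean_SD d1 d2 \<epsilon> z n =
    (\<integral>\<omega>. SD d1 d2 \<omega> (replicate (d1 + d2) 0) (target d2 z n) \<partial>perc (d1 + d2) \<epsilon>)"

lemma mean_SD_superadditive:
  assumes "d1 \<ge> 1" "length z = d1" "\<forall>r\<in>set z. r > 0"
  shows "mean_SD d1 d2 \<epsilon> z m + mean_SD d1 d2 \<epsilon> z n \<le> mean_SD d1 d2 \<epsilon> z (m + n)"
proof -
  let ?T = "target d2 z" and ?origin = "replicate (d1 + d2) 0 :: int list"
  let ?E = "\<lambda>x y. \<integral>\<omega>. SD d1 d2 \<omega> x y \<partial>perc (d1 + d2) \<epsilon>"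
  have sites: "?origin \<in> sites (d1 + d2)" "?T k \<in> sites (d1 + d2)"
    "vadd (?T n) (?T m) \<in> sites (d1 + d2)" for k
    using target_in_sites[OF assms(2)] by (auto simp: sites_def)
  have drops: "drop d1 ?origin = replicate d2 0" "drop d1 (?T k) = replicate d2 0"
    "drop d1 (vadd (?T n) (?T m)) = replicate d2 0" for k
    unfolding drop_vadd drop_target[OF assms(2)] by (auto intro: nth_equalityI)
  have "mean_SD d1 d2 \<epsilon> z m + mean_SD d1 d2 \<epsilon> z n
      = ?E ?origin (?T m) + ?E (?T m) (vadd (?T n) (?T m))"
    unfolding mean_SD_def integral_SD_translate[OF assms(1) sites(2)[of m] sites(2)[of n]] ..
  also have "\<dots> \<le> ?E ?origin (vadd (?T n) (?T m))"
    using wprec_target_chain(1,2)[OF assms(2,3)] sites drops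
    by (intro integral_SD_superadditive assms(1)) auto
  also have "\<dots> \<le> mean_SD d1 d2 \<epsilon> z (m + n)"
    unfolding mean_SD_def using wprec_target_chain(3)[OF assms(2,3)] drops
    by (intro integral_SD_mono_endpoint assms(1)) auto
  finally show ?thesis .
qed

lemma mean_SD_nonneg:
  assumes "d1 \<ge> 1" "length z = d1"
  shows "0 \<le> mean_SD d1 d2 \<epsilon> z n"
  unfolding mean_SD_def using assms
  by (intro Bochner_Integration.integral_nonneg SD_nonneg) (auto simp: drop_target)

lemma mean_SD_le_linear:
  assumes "d1 \<ge> 1" "length z = d1" "\<forall>r\<in>set z. r > 0"
  shows "mean_SD d1 d2 \<epsilon> z n \<le> z ! 0 * real n"
proof -
  interpret prob_space "perc (d1 + d2) \<epsilon>" by (rule prob_space_perc)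
  have "z ! 0 > 0" using assms by auto
  then have "real (nat (target d2 z n ! 0 - replicate (d1 + d2) 0 ! 0)) \<le> z ! 0 * real n"
    using assms(1,2) by (simp add: nth_target mult.commute)
  moreover have "mean_SD d1 d2 \<epsilon> z n
      \<le> (\<integral>\<omega>. real (nat (target d2 z n ! 0 - replicate (d1 + d2) 0 ! 0)) \<partial>perc (d1 + d2) \<epsilon>)"
    unfolding mean_SD_def using assms(1,2)
    by (intro integral_mono SD_integrable SD_le_first_coord_gap) (auto simp: drop_target)
  ultimately show ?thesis by (simp add: prob_space)
qed

theorem mainTheorem4:
  fixes d1 d2 :: nat and \<epsilon> :: real and z :: "real list"
  assumes "d1 \<ge> 1"
    and "0 \<le> \<epsilon>" and "\<epsilon> \<le> 1"
    and "length z = d1" and "\<forall>r\<in>set z. r > 0"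
  shows "convergent (\<lambda>n::nat. (1 / real n) *
           (\<integral>\<omega>. SD d1 d2 \<omega> (replicate (d1 + d2) 0) (target d2 z n) \<partial>perc (d1 + d2) \<epsilon>))"
  using fekete_superadditive_convergent[of "mean_SD d1 d2 \<epsilon> z"]
    mean_SD_superadditive[OF assms(1,4,5)] mean_SD_nonneg[OF assms(1,4)]
    mean_SD_le_linear[OF assms(1,4,5)]
  unfolding mean_SD_def by blast

end
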